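(* Let $\lambda,\mu,\alpha>0$ and let $\xi(t)$, $t\ge 0$, be the Poisson process with uniform catastrophes with parameters $\lambda,\mu,\alpha$ (defined in the context). Let $\varphi:(0,\infty)\to(0,\infty)$ be a function with $\varphi(T)\to\infty$ as $T\to\infty$, such that $\lim_{T\to\infty}\varphi(T)/T=0$ and there exists $a\in(0,1)$ with $\lim_{T\to\infty}\varphi(T)/T^a=\infty$. Then the family of random variables $\xi_T(1):=\xi(T)/\varphi(T)$ satisfies the large deviation principle on $\mathbb{R}$ with normalizing function $\psi(T)=\varphi(T)$ and rate function $$ I_1(x)=\begin{cases}\infty, & x\in(-\infty,0),\\ x\ln\left(\frac{\lambda+\mu}{\lambda}\right), & x\in[0,\infty).\end{cases} $$
   Context: Poisson process with uniform catastrophes: let $\eta(n)$, $n\in\mathbb{Z}^+=\{0,1,2,\dots\}$, be a Markov chain on $\mathbb{Z}^+$ with $\eta(0)=0$ and transition probabilities $\mathbf{P}(\eta(n+1)=j\mid\eta(n)=i)=\frac{\lambda}{\lambda+\mu}$ if $j=i+1$ (and $i\ge 1$), $=\frac{\mu}{i(\lambda+\mu)}$ if $0\le j<i$, $i\neq0$, and $=1$ if $i=0$, $j=1$. Let $\nu(t)$, $t\ge0$, be a Poisson process with rate $\alpha$, independent of $\eta$. Set $\xi(t):=\eta(\nu(t))$. Large deviation principle (LDP): a family of real random variables $X_T$ satisfies the LDP with rate function $I:\mathbb{R}\to[0,\infty]$ and normalizing function $\psi(T)\to\infty$ if for every $c\ge0$ the set $\{x: I(x)\le c\}$ is compact, and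 for every Borel set $B\subseteq\mathbb{R}$, $\limsup_{T\to\infty}\frac{1}{\psi(T)}\ln\mathbf{P}(X_T\in B)\le -I([B])$ and $\liminf_{T\to\infty}\frac{1}{\psi(T)}\ln\mathbf{P}(X_T\in B)\ge -I((B))$, where $[B]$ and $(B)$ denote closure and interior, $I(B)=\inf_{x\in B}I(x)$ and $I(\emptyset)=\infty$. *)

theory Defs
  imports "HOL-Analysis.Analysis"
begin

text \<open>Transition probabilities of the embedded Markov chain eta on the nonnegative integers.\<close>
definition eta_trans :: "real \<Rightarrow> real \<Rightarrow> nat \<Rightarrow> nat \<Rightarrow> real" where
  "eta_trans lam mu i j =
     (if i = 0 then (if j = 1 then 1 else 0)
      else if j = i + 1 then lam / (lam + mu)
      else if j < i then mu / (real i * (lam + mu))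
      else 0)"

text \<open>Law of eta(n) started at eta(0) = 0 (Chapman-Kolmogorov; eta(n) \<le> n).\<close>
fun eta_dist :: "real \<Rightarrow> real \<Rightarrow> nat \<Rightarrow> nat \<Rightarrow> real" where
  "eta_dist lam mu 0 j = (if j = 0 then 1 else 0)"
| "eta_dist lam mu (Suc n) j = (\<Sum>i\<le>n. eta_dist lam mu n i * eta_trans lam mu i j)"

definition poisson_prob :: "real \<Rightarrow> real \<Rightarrow> nat \<Rightarrow> real" where
  "poisson_prob alpha t n = exp (- alpha * t) * (alpha * t) ^ n / fact n"

text \<open>Law of xi(t) = eta(nu(t)), eta and nu independent.\<close>
definition xi_prob :: "real \<Rightarrow> real \<Rightarrow> real \<Rightarrow> real \<Rightarrow> nat \<Rightarrow> real" where
  "xi_prob lam mu alpha t j = (\<Sum>n. poisson_prob alpha t n * eta_dist lam mu n j)"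

definition xi_scaled_prob ::
    "real \<Rightarrow> real \<Rightarrow> real \<Rightarrow> (real \<Rightarrow> real) \<Rightarrow> real \<Rightarrow> real set \<Rightarrow> real" where
  "xi_scaled_prob lam mu alpha phi T B =
     (\<Sum>j. if real j / phi T \<in> B then xi_prob lam mu alpha T j else 0)"

definition eln :: "real \<Rightarrow> ereal" where
  "eln p = (if p > 0 then ereal (ln p) else - \<infinity>)"

definition rate_set :: "(real \<Rightarrow> ereal) \<Rightarrow> real set \<Rightarrow> ereal" where
  "rate_set I B = (INF x\<in>B. I x)"

text \<open>Large deviation principle for a family X_T, given through
  P T B = P(X_T \<in> B), with rate function I and normalizing function psi.\<close>
definition LDP :: "(real \<Rightarrow> real set \<Rightarrow> real) \<Rightarrow> (real \<Rightarrow> ereal) \<Rightarrow> (real \<Rightarrow> real) \<Rightarrow> bool" where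
  "LDP P I psi \<longleftrightarrow>
     (\<forall>x. I x \<ge> 0) \<and>
     (\<forall>c::real. c \<ge> 0 \<longrightarrow> compact {x. I x \<le> ereal c}) \<and>
     (\<forall>B \<in> sets borel.
        Limsup at_top (\<lambda>T. eln (P T B) / ereal (psi T)) \<le> - rate_set I (closure B) \<and>
        Liminf at_top (\<lambda>T. eln (P T B) / ereal (psi T)) \<ge> - rate_set I (interior B))"

definition I1 :: "real \<Rightarrow> real \<Rightarrow> real \<Rightarrow> ereal" where
  "I1 lam mu x = (if x < 0 then \<infinity> else ereal (x * ln ((lam + mu) / lam)))"

end

theory Submission
  imports Defs
begin

text \<open>Write p = lam/(lam+mu) and q = mu/(lam+mu). The chain eta climbs by one with
  probability p and otherwise falls to a uniformly chosen lower state, so P(eta(n) \<ge> k)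
  behaves like p^k uniformly in n.

  Upper bound: for 1 < r < 1/p the function r^j satisfies a geometric drift condition, so
  E r^eta(n), and hence E r^xi(T), stays bounded; Chebyshev gives
  P(xi(T) \<ge> x phi(T)) \<le> M r^(-x phi(T)), and then r tends to 1/p.

  Lower bound: at time m or m + 1 the chain sits at 0 with probability \<ge> q/(2m), after which
  it climbs straight to level k with probability p^k. The Poisson clock nu(T) lies in a
  window [k + 2, O(T)] with probability \<ge> 1/2, since phi(T) = o(T) keeps k \<approx> x phi(T)
  below alpha T/4. This yields P(xi(T)/phi(T) \<approx> x) \<ge> c p^(x phi(T))/T, and the
  factor 1/T is negligible because ln T = o(phi(T)).\<close>

lemma eta_trans_nonneg: "lam > 0 \<Longrightarrow> mu > 0 \<Longrightarrow> eta_trans lam mu i j \<ge> 0"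
  by (simp add: eta_trans_def)

lemma eta_trans_eq_0: "i + 1 < j \<Longrightarrow> eta_trans lam mu i j = 0"
  by (simp add: eta_trans_def)

lemma sum_eta_trans_mult:
  assumes "i + 1 \<le> L"
  shows "(\<Sum>j\<le>L. eta_trans lam mu i j * w j) =
    (if i = 0 then w 1 else lam/(lam+mu) * w (i+1) + mu/(real i*(lam+mu)) * (\<Sum>j<i. w j))"
proof (cases "i = 0")
  case True
  have "(\<Sum>j\<le>L. eta_trans lam mu i j * w j) = (\<Sum>j\<le>L. if j = 1 then w j else 0)"
    using True by (intro sum.cong) (auto simp: eta_trans_def)
  then show ?thesis using assms True by (simp add: sum.delta)
next
  case False
  have "(\<Sum>j\<le>L. eta_trans lam mu i j * w j) =
     (\<Sum>j\<le>L. (if j = i+1 then lam/(lam+mu) * w j else 0) +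
       (if j < i then mu/(real i*(lam+mu)) * w j else 0))"
    using False by (intro sum.cong) (auto simp: eta_trans_def)
  also have "\<dots> = lam/(lam+mu) * w (i+1) + (\<Sum>j\<in>{j\<in>{..L}. j < i}. mu/(real i*(lam+mu)) * w j)"
    using assms by (simp add: sum.distrib sum.delta sum.inter_filter[symmetric] del: sum.inter_filter)
  also have "{j\<in>{..L}. j < i} = {..<i}" using assms by auto
  finally show ?thesis using False by (simp add: sum_distrib_left)
qed

lemma sum_eta_trans:
  assumes "lam > 0" "mu > 0" "i + 1 \<le> L"
  shows "(\<Sum>j\<le>L. eta_trans lam mu i j) = 1"
proof -
  have "lam/(lam+mu) + mu/(real i*(lam+mu)) * real i = 1" if "i \<noteq> 0"
  proof -
    have "mu/(real i*(lam+mu)) * real i = mu/(lam+mu)" using that by simp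
    then show ?thesis using assms by (simp add: add_divide_distrib[symmetric])
  qed
  then show ?thesis
    using sum_eta_trans_mult[OF assms(3), of lam mu "\<lambda>_. 1"] by (simp split: if_splits)
qed

lemma eta_dist_nonneg: "lam > 0 \<Longrightarrow> mu > 0 \<Longrightarrow> eta_dist lam mu n j \<ge> 0"
  by (induction n arbitrary: j) (auto intro!: sum_nonneg mult_nonneg_nonneg eta_trans_nonneg)

lemma eta_dist_eq_0: "n < j \<Longrightarrow> eta_dist lam mu n j = 0"
  by (induction n arbitrary: j) (auto intro!: sum.neutral simp: eta_trans_eq_0)

lemma sum_eta_dist:
  assumes "lam > 0" "mu > 0"
  shows "(\<Sum>j\<le>n. eta_dist lam mu n j) = 1"
proof (induction n)
  case (Suc n)
  have "(\<Sum>j\<le>Suc n. eta_dist lam mu (Suc n) j) =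
      (\<Sum>j\<le>Suc n. \<Sum>i\<le>n. eta_dist lam mu n i * eta_trans lam mu i j)"
    by simp
  also have "\<dots> = (\<Sum>i\<le>n. eta_dist lam mu n i * (\<Sum>j\<le>Suc n. eta_trans lam mu i j))"
    unfolding sum_distrib_left by (rule sum.swap)
  also have "\<dots> = (\<Sum>i\<le>n. eta_dist lam mu n i)"
    using assms by (intro sum.cong refl, subst sum_eta_trans) auto
  finally show ?case using Suc by simp
qed simp

lemma eta_dist_le_1:
  assumes "lam > 0" "mu > 0"
  shows "eta_dist lam mu n j \<le> 1"
proof (cases "j \<le> n")
  case True
  then have "eta_dist lam mu n j \<le> (\<Sum>j\<le>n. eta_dist lam mu n j)"
    using assms by (intro member_le_sum eta_dist_nonneg) auto
  then show ?thesis using sum_eta_dist[OF assms] by simp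
qed (simp add: eta_dist_eq_0)

declare eta_dist.simps(2)[simp del]

lemma eta_dist_Suc_ge:
  assumes "lam > 0" "mu > 0" "i \<le> m"
  shows "eta_dist lam mu m i * eta_trans lam mu i j \<le> eta_dist lam mu (Suc m) j"
  unfolding eta_dist.simps(2) using assms
  by (intro member_le_sum) (auto intro!: mult_nonneg_nonneg eta_dist_nonneg eta_trans_nonneg)

lemma eta_dist_climb:
  assumes "lam > 0" "mu > 0"
  shows "(lam/(lam+mu))^i * eta_dist lam mu m 0 \<le> eta_dist lam mu (Suc m + i) (Suc i)"
proof (induction i)
  case 0
  then show ?case using eta_dist_Suc_ge[OF assms, of 0 m 1] by (simp add: eta_trans_def)
next
  case (Suc i)
  have "(lam/(lam+mu))^Suc i * eta_dist lam mu m 0 \<le>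
      eta_dist lam mu (Suc m + i) (Suc i) * eta_trans lam mu (Suc i) (Suc (Suc i))"
    using mult_left_mono[OF Suc, of "lam/(lam+mu)"] assms by (simp add: eta_trans_def mult_ac)
  also have "\<dots> \<le> eta_dist lam mu (Suc (Suc m + i)) (Suc (Suc i))"
    using assms by (intro eta_dist_Suc_ge) auto
  finally show ?case by simp
qed

text \<open>Every state i \<in> {1..m} jumps to 0 with probability q/i \<ge> q/m.\<close>
lemma eta_dist_Suc_0_ge:
  assumes "lam > 0" "mu > 0" "m \<ge> 1"
  shows "mu/(lam+mu) / real m * (1 - eta_dist lam mu m 0) \<le> eta_dist lam mu (Suc m) 0"
proof -
  have split0: "{..m} = insert 0 {1..m}" by auto
  have mass: "(\<Sum>i\<in>{1..m}. eta_dist lam mu m i) = 1 - eta_dist lam mu m 0"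
    using sum_eta_dist[OF assms(1,2), of m] by (simp add: split0)
  have "mu/(lam+mu) / real m * (1 - eta_dist lam mu m 0) =
      (\<Sum>i\<in>{1..m}. eta_dist lam mu m i * (mu/(lam+mu) / real m))"
    unfolding mass[symmetric] sum_distrib_left by (simp add: mult.commute)
  also have "\<dots> \<le> (\<Sum>i\<in>{1..m}. eta_dist lam mu m i * eta_trans lam mu i 0)"
  proof (intro sum_mono mult_left_mono eta_dist_nonneg)
    fix i assume i: "i \<in> {1..m}"
    then have "mu/(lam+mu) / real m \<le> mu/(lam+mu) / real i"
      using assms by (intro divide_left_mono) auto
    then show "mu/(lam+mu) / real m \<le> eta_trans lam mu i 0"
      using i by (simp add: eta_trans_def mult.commute)
  qed (use assms in auto)
  also have "\<dots> = eta_dist lam mu (Suc m) 0"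
    by (simp add: eta_dist.simps(2) split0 eta_trans_def)
  finally show ?thesis .
qed

lemma eta_dist_0_ge_or_Suc:
  assumes "lam > 0" "mu > 0" "m \<ge> 1"
  shows "mu/(lam+mu) / (2*real m) \<le> eta_dist lam mu m 0 \<or>
    mu/(lam+mu) / (2*real m) \<le> eta_dist lam mu (Suc m) 0"
proof (cases "eta_dist lam mu m 0 \<ge> 1/2")
  case True
  have "mu/(lam+mu) / (2*real m) \<le> 1 / (2*real m)"
    using assms by (intro divide_right_mono) auto
  also have "\<dots> \<le> 1/2" using assms by (simp add: field_simps)
  finally show ?thesis using True by linarith
next
  case False
  have "mu/(lam+mu) / (2*real m) = mu/(lam+mu) / real m * (1/2)" by simp
  also have "\<dots> \<le> mu/(lam+mu) / real m * (1 - eta_dist lam mu m 0)"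
    using False assms by (intro mult_left_mono) auto
  finally show ?thesis using eta_dist_Suc_0_ge[OF assms] by auto
qed

text \<open>The chain is at 0 with probability at least q/(2m) at time m = n - k - 1 or at
  time m + 1, and from there climbs straight to k + 1, respectively k.\<close>
lemma eta_dist_pair_ge:
  assumes "lam > 0" "mu > 0" "k \<ge> 1" "n \<ge> k + 2"
  shows "(lam/(lam+mu))^k * (mu/(lam+mu)) / (2 * real n) \<le>
    eta_dist lam mu n k + eta_dist lam mu n (Suc k)"
proof -
  define p where "p = lam/(lam+mu)"
  define q where "q = mu/(lam+mu)"
  define m where "m = n - k - 1"
  have p: "0 < p" "p \<le> 1" and q: "q > 0" using assms by (auto simp: p_def q_def)
  have m: "m \<ge> 1" "real m \<le> real n" using assms by (auto simp: m_def)
  have nonneg: "eta_dist lam mu n k \<ge> 0" "eta_dist lam mu n (Suc k) \<ge> 0"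
    using assms eta_dist_nonneg by auto
  have "p^k * q / (2 * real n) \<le> p^k * (q / (2 * real m))"
    using m p q by (simp add: divide_left_mono frac_le)
  moreover have "p^k * (q / (2 * real m)) \<le> p^(k-1) * (q / (2 * real m))"
    using p q m by (intro mult_right_mono power_decreasing) auto
  moreover from eta_dist_0_ge_or_Suc[OF assms(1,2) m(1), folded q_def]
  have "p^k * (q / (2 * real m)) \<le> eta_dist lam mu n (Suc k) \<or>
      p^(k-1) * (q / (2 * real m)) \<le> eta_dist lam mu n k"
  proof (elim disjE)
    assume "q / (2*real m) \<le> eta_dist lam mu m 0"
    then have "p^k * (q / (2 * real m)) \<le> p^k * eta_dist lam mu m 0"
      using p by (intro mult_left_mono) auto
    also have "\<dots> \<le> eta_dist lam mu (Suc m + k) (Suc k)"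
      unfolding p_def by (rule eta_dist_climb[OF assms(1,2)])
    also have "Suc m + k = n" using assms by (simp add: m_def)
    finally show ?thesis by simp
  next
    assume "q / (2*real m) \<le> eta_dist lam mu (Suc m) 0"
    then have "p^(k-1) * (q / (2 * real m)) \<le> p^(k-1) * eta_dist lam mu (Suc m) 0"
      using p by (intro mult_left_mono) auto
    also have "\<dots> \<le> eta_dist lam mu (Suc (Suc m) + (k - 1)) (Suc (k - 1))"
      unfolding p_def by (rule eta_dist_climb[OF assms(1,2)])
    also have "\<dots> = eta_dist lam mu n k"
      by (rule arg_cong2[where f = "eta_dist lam mu"]) (use assms in \<open>auto simp: m_def\<close>)
    finally show ?thesis by simp
  qed
  ultimately show ?thesis using nonneg by (auto simp: p_def q_def)
qed

lemma sum_eta_trans_power_le: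
  assumes "lam > 0" "mu > 0" "r > 1" "i \<ge> 1" "i + 1 \<le> L"
  shows "(\<Sum>j\<le>L. eta_trans lam mu i j * r^j) \<le>
    (lam/(lam+mu) * r + mu/(lam+mu) / (r - 1) / real i) * r^i"
proof -
  have nz: "real i \<noteq> 0" "lam + mu \<noteq> 0" "r - 1 \<noteq> 0" using assms by auto
  have "(\<Sum>j<i. r^j) \<le> r^i / (r - 1)"
    using assms by (simp add: geometric_sum divide_right_mono)
  then have "mu/(real i*(lam+mu)) * (\<Sum>j<i. r^j) \<le> mu/(real i*(lam+mu)) * (r^i / (r - 1))"
    using assms by (intro mult_left_mono) auto
  also have "\<dots> = mu/(lam+mu) / (r - 1) / real i * r^i"
    using nz by (simp add: field_simps)
  finally have "lam/(lam+mu) * r^(i+1) + mu/(real i*(lam+mu)) * (\<Sum>j<i. r^j) \<le>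
      (lam/(lam+mu) * r + mu/(lam+mu) / (r - 1) / real i) * r^i"
    by (simp add: distrib_right)
  then show ?thesis
    using assms by (subst sum_eta_trans_mult) auto
qed

lemma eta_trans_geometric_drift:
  assumes "lam > 0" "mu > 0" "r > 1" "lam/(lam+mu) * r < 1"
  obtains \<theta> b where "0 \<le> \<theta>" "\<theta> < 1"
    "\<And>i L. i + 1 \<le> L \<Longrightarrow> (\<Sum>j\<le>L. eta_trans lam mu i j * r^j) \<le> \<theta> * r^i + b"
proof -
  define c where "c = lam/(lam+mu) * r"
  define a where "a = mu/(lam+mu) / (r - 1)"
  have c: "0 < c" "c < 1" and a: "a > 0" using assms by (auto simp: c_def a_def)
  have "eventually (\<lambda>i. a / real i < (1 - c) / 2) sequentially"
    using c by (intro order_tendstoD(2)[OF lim_const_over_n]) simp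
  then obtain i0 where i0: "\<And>i. i \<ge> i0 \<Longrightarrow> a / real i < (1 - c) / 2"
    by (auto simp: eventually_sequentially)
  define b where "b = max r ((c + a) * r^i0)"
  have b: "r \<le> b" "(c + a) * r^i0 \<le> b" by (simp_all add: b_def)
  have "(\<Sum>j\<le>L. eta_trans lam mu i j * r^j) \<le> (1 + c) / 2 * r^i + b"
    if iL: "i + 1 \<le> L" for i L
  proof (cases "i = 0")
    case True
    have "(\<Sum>j\<le>L. eta_trans lam mu i j * r^j) = r"
      using sum_eta_trans_mult[OF iL, of lam mu "\<lambda>j. r^j"] True by simp
    then show ?thesis using True b c by (simp add: add_increasing)
  next
    case False
    then have bound: "(\<Sum>j\<le>L. eta_trans lam mu i j * r^j) \<le> (c + a / real i) * r^i"
      using sum_eta_trans_power_le[OF assms(1-3) _ iL] by (simp add: c_def a_def)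
    show ?thesis
    proof (cases "i \<ge> i0")
      case True
      then have "(c + a / real i) * r^i \<le> (1 + c) / 2 * r^i"
        using i0[OF True] assms by (intro mult_right_mono) auto
      then show ?thesis using bound b assms by linarith
    next
      case False
      have "a / real i \<le> a" using \<open>i \<noteq> 0\<close> a by (simp add: divide_le_eq)
      moreover have "r^i \<le> r^i0" using False assms by (intro power_increasing) auto
      ultimately have "(c + a / real i) * r^i \<le> (c + a) * r^i0"
        using c a assms by (intro mult_mono add_left_mono) auto
      moreover have "0 \<le> (1 + c) / 2 * r^i" using c assms by simp
      ultimately show ?thesis using bound b by linarith
    qed
  qed
  then show ?thesis using that[of "(1 + c) / 2"] c by auto
qed

lemma eta_dist_moment_le_drift:
  assumes "lam > 0" "mu > 0" "0 \<le> \<theta>" "\<theta> < 1"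
    and drift: "\<And>i L. i + 1 \<le> L \<Longrightarrow> (\<Sum>j\<le>L. eta_trans lam mu i j * w j) \<le> \<theta> * w i + b"
  shows "(\<Sum>j\<le>n. eta_dist lam mu n j * w j) \<le> max (w 0) (b / (1 - \<theta>))"
proof (induction n)
  case (Suc n)
  define M where "M = max (w 0) (b / (1 - \<theta>))"
  have "(\<Sum>j\<le>Suc n. eta_dist lam mu (Suc n) j * w j) =
      (\<Sum>j\<le>Suc n. \<Sum>i\<le>n. eta_dist lam mu n i * (eta_trans lam mu i j * w j))"
    by (simp add: eta_dist.simps(2) sum_distrib_right mult.assoc)
  also have "\<dots> = (\<Sum>i\<le>n. eta_dist lam mu n i * (\<Sum>j\<le>Suc n. eta_trans lam mu i j * w j))"
    unfolding sum_distrib_left by (rule sum.swap)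
  also have "\<dots> \<le> (\<Sum>i\<le>n. eta_dist lam mu n i * (\<theta> * w i + b))"
    using assms by (intro sum_mono mult_left_mono eta_dist_nonneg drift) auto
  also have "\<dots> = \<theta> * (\<Sum>i\<le>n. eta_dist lam mu n i * w i) + b * (\<Sum>i\<le>n. eta_dist lam mu n i)"
    by (simp add: sum_distrib_left sum.distrib algebra_simps)
  also have "\<dots> = \<theta> * (\<Sum>i\<le>n. eta_dist lam mu n i * w i) + b"
    using sum_eta_dist[OF assms(1,2)] by simp
  also have "\<dots> \<le> \<theta> * M + b" using Suc assms by (simp add: M_def mult_left_mono)
  also have "\<dots> \<le> M"
    using assms by (simp add: M_def max_def field_simps split: if_splits)
  finally show ?case by (simp add: M_def)
qed simp

lemma eta_dist_exp_moment_bounded: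
  assumes "lam > 0" "mu > 0" "r > 1" "lam/(lam+mu) * r < 1"
  obtains M where "M > 0" "\<And>n. (\<Sum>j\<le>n. eta_dist lam mu n j * r^j) \<le> M"
proof -
  obtain \<theta> b where "0 \<le> \<theta>" "\<theta> < 1"
    "\<And>i L. i + 1 \<le> L \<Longrightarrow> (\<Sum>j\<le>L. eta_trans lam mu i j * r^j) \<le> \<theta> * r^i + b"
    using eta_trans_geometric_drift[OF assms] by blast
  from eta_dist_moment_le_drift[OF assms(1,2) this]
  show ?thesis by (intro that[of "max 1 (b / (1 - \<theta>))"]) auto
qed

lemma poisson_prob_nonneg: "alpha \<ge> 0 \<Longrightarrow> t \<ge> 0 \<Longrightarrow> poisson_prob alpha t n \<ge> 0"
  by (simp add: poisson_prob_def)

lemma sums_poisson_prob_exp: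
  "(\<lambda>n. poisson_prob alpha t n * exp (s * real n)) sums exp (alpha * t * (exp s - 1))"
proof -
  have "(\<lambda>n. exp (- alpha * t) * ((alpha * t * exp s)^n /\<^sub>R fact n)) sums
      (exp (- alpha * t) * exp (alpha * t * exp s))"
    by (intro sums_mult exp_converges)
  moreover have "exp (- alpha * t) * ((alpha * t * exp s)^n /\<^sub>R fact n) =
      poisson_prob alpha t n * exp (s * real n)" for n
    by (simp add: poisson_prob_def power_mult_distrib exp_of_nat_mult[symmetric] field_simps)
  moreover have "exp (- alpha * t) * exp (alpha * t * exp s) = exp (alpha * t * (exp s - 1))"
    by (simp add: exp_add[symmetric] algebra_simps)
  ultimately show ?thesis by simp
qed

lemma sums_poisson_prob: "(\<lambda>n. poisson_prob alpha t n) sums 1"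
  using sums_poisson_prob_exp[of alpha t 0] by simp

lemma summable_poisson_prob: "summable (\<lambda>n. poisson_prob alpha t n)"
  using sums_poisson_prob by (rule sums_summable)

lemma one_le_exp_window:
  "1 \<le> exp (real K - real n) + (if n \<in> {K..N} then 1 else 0) + exp (real n - real N)"
proof -
  consider "n < K" | "n \<in> {K..N}" | "N < n" by force
  then show ?thesis
  proof cases
    case 1
    then have "1 \<le> exp (real K - real n)" by simp
    then show ?thesis using 1 by (simp add: add_increasing2)
  next
    case 2
    then show ?thesis by (simp add: add_increasing add_increasing2)
  next
    case 3
    then have "1 \<le> exp (real n - real N)" by simp
    then show ?thesis using 3 by (simp add: add_increasing)
  qed
qed

text \<open>Exponential Chebyshev bounds for both tails, with exponents -1 and 1.\<close>
lemma poisson_prob_window_ge: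
  assumes "alpha \<ge> 0" "t \<ge> 0"
  shows "1 - exp (real K + alpha * t * (exp (-1) - 1)) - exp (- real N + alpha * t * (exp 1 - 1))
    \<le> (\<Sum>n\<in>{K..N}. poisson_prob alpha t n)"
proof -
  define A where "A = exp (real K) * exp (alpha * t * (exp (-1) - 1))"
  define C where "C = exp (- real N) * exp (alpha * t * (exp 1 - 1))"
  define S where "S = (\<Sum>n\<in>{K..N}. poisson_prob alpha t n)"
  have "poisson_prob alpha t n \<le> exp (real K) * (poisson_prob alpha t n * exp (-1 * real n)) +
      (if n \<in> {K..N} then poisson_prob alpha t n else 0) +
      exp (- real N) * (poisson_prob alpha t n * exp (1 * real n))" for n
    using mult_left_mono[OF one_le_exp_window poisson_prob_nonneg[OF assms, of n], of K n N]
    by (auto simp: algebra_simps exp_diff exp_minus field_simps)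
  moreover have "(\<lambda>n. exp (real K) * (poisson_prob alpha t n * exp (-1 * real n)) +
      (if n \<in> {K..N} then poisson_prob alpha t n else 0) +
      exp (- real N) * (poisson_prob alpha t n * exp (1 * real n))) sums (A + S + C)"
    unfolding A_def C_def S_def
    by (intro sums_add sums_mult sums_poisson_prob_exp sums_If_finite_set) simp
  ultimately have "1 \<le> A + S + C" by (rule sums_le[OF _ sums_poisson_prob])
  then show ?thesis by (simp add: A_def C_def S_def exp_add[symmetric])
qed

lemma poisson_prob_window_ge_half:
  assumes "alpha \<ge> 0" "t \<ge> 0" "real K \<le> alpha * t / 4" "alpha * t \<ge> 8"
  obtains N where "0 < real N" "real N \<le> 5 * (alpha * t)"
    "1/2 \<le> (\<Sum>n\<in>{K..N}. poisson_prob alpha t n)"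
proof
  define N where "N = nat \<lceil>(exp 1 + 1) * (alpha * t)\<rceil> + 2"
  have "0 \<le> (exp 1 + 1) * (alpha * t)" using assms by simp
  then have N: "(exp 1 + 1) * (alpha * t) + 2 \<le> real N" "real N \<le> (exp 1 + 1) * (alpha * t) + 3"
    unfolding N_def by linarith+
  then show "0 < real N" using \<open>0 \<le> (exp 1 + 1) * (alpha * t)\<close> by linarith
  have "(exp 1 + 1) * (alpha * t) \<le> 4 * (alpha * t)"
    using exp_le assms by (intro mult_right_mono) auto
  then show "real N \<le> 5 * (alpha * t)" using N(2) assms by linarith
  have e: "2 \<le> exp (1::real)" using exp_ge_add_one_self[of 1] by simp
  then have "exp (-1::real) \<le> 1/2" by (simp add: exp_minus field_simps)
  then have "alpha * t * exp (-1) \<le> alpha * t * (1/2)" using assms by (intro mult_left_mono) auto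
  then have "exp (real K + alpha * t * (exp (-1) - 1)) \<le> exp (-2)"
    using assms by (simp add: algebra_simps)
  moreover have "exp (- real N + alpha * t * (exp 1 - 1)) \<le> exp (-2)"
    using N(1) assms(4) by (simp add: algebra_simps)
  moreover have "exp (-2::real) \<le> 1/4"
  proof -
    have "2 * 2 \<le> exp (1::real) * exp 1" using e by (intro mult_mono) auto
    then show ?thesis by (simp add: exp_minus exp_add[symmetric] field_simps)
  qed
  ultimately show "1/2 \<le> (\<Sum>n\<in>{K..N}. poisson_prob alpha t n)"
    using poisson_prob_window_ge[OF assms(1,2), of K N] by linarith
qed

lemma summable_poisson_eta:
  assumes "lam > 0" "mu > 0" "alpha \<ge> 0" "t \<ge> 0"
  shows "summable (\<lambda>n. poisson_prob alpha t n * eta_dist lam mu n j)"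
proof (rule summable_comparison_test[OF _ summable_poisson_prob])
  have "\<bar>poisson_prob alpha t n * eta_dist lam mu n j\<bar> \<le> poisson_prob alpha t n" for n
    using assms poisson_prob_nonneg eta_dist_nonneg eta_dist_le_1
    by (simp add: abs_mult mult_left_le)
  then show "\<exists>N. \<forall>n\<ge>N. norm (poisson_prob alpha t n * eta_dist lam mu n j) \<le> poisson_prob alpha t n"
    by auto
qed

lemma xi_prob_nonneg:
  assumes "lam > 0" "mu > 0" "alpha \<ge> 0" "t \<ge> 0"
  shows "xi_prob lam mu alpha t j \<ge> 0"
  unfolding xi_prob_def using assms
  by (intro suminf_nonneg summable_poisson_eta) (auto intro!: mult_nonneg_nonneg eta_dist_nonneg poisson_prob_nonneg)

lemma sum_xi_prob_mult_le:
  assumes "lam > 0" "mu > 0" "alpha \<ge> 0" "t \<ge> 0"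
    and w: "\<And>j. w j \<ge> 0" and M: "\<And>n. (\<Sum>j\<le>n. eta_dist lam mu n j * w j) \<le> M"
  shows "(\<Sum>j<J. w j * xi_prob lam mu alpha t j) \<le> M"
proof -
  have sm: "summable (\<lambda>n. w j * (poisson_prob alpha t n * eta_dist lam mu n j))" for j
    using summable_poisson_eta[OF assms(1-4)] by (rule summable_mult)
  have "(\<Sum>j<J. w j * xi_prob lam mu alpha t j) =
      (\<Sum>n. \<Sum>j<J. w j * (poisson_prob alpha t n * eta_dist lam mu n j))"
    unfolding xi_prob_def using sm
    by (simp add: suminf_mult[symmetric] summable_poisson_eta[OF assms(1-4)] suminf_sum)
  also have "\<dots> \<le> (\<Sum>n. poisson_prob alpha t n * M)"
  proof (rule suminf_le)
    fix n
    have "(\<Sum>j<J. eta_dist lam mu n j * w j) \<le> (\<Sum>j\<in>{..<J} \<union> {..n}. eta_dist lam mu n j * w j)"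
      using assms by (intro sum_mono2) (auto intro!: mult_nonneg_nonneg eta_dist_nonneg)
    also have "\<dots> = (\<Sum>j\<le>n. eta_dist lam mu n j * w j)"
      by (rule sum.mono_neutral_right) (auto simp: eta_dist_eq_0)
    finally have "(\<Sum>j<J. eta_dist lam mu n j * w j) \<le> M" using M[of n] by linarith
    from mult_left_mono[OF this poisson_prob_nonneg[OF assms(3,4)]]
    show "(\<Sum>j<J. w j * (poisson_prob alpha t n * eta_dist lam mu n j)) \<le> poisson_prob alpha t n * M"
      by (simp add: sum_distrib_left mult_ac)
  qed (use sm summable_poisson_prob in \<open>auto intro: summable_sum summable_mult2\<close>)
  also have "\<dots> = M"
    using suminf_mult2[OF summable_poisson_prob] sums_unique[OF sums_poisson_prob] by simp
  finally show ?thesis .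
qed

lemma xi_prob_moment_le:
  assumes "lam > 0" "mu > 0" "alpha \<ge> 0" "t \<ge> 0"
    and w: "\<And>j. w j \<ge> 0" and M: "\<And>n. (\<Sum>j\<le>n. eta_dist lam mu n j * w j) \<le> M"
  shows "summable (\<lambda>j. w j * xi_prob lam mu alpha t j)"
    and "(\<Sum>j. w j * xi_prob lam mu alpha t j) \<le> M"
proof -
  have nonneg: "w j * xi_prob lam mu alpha t j \<ge> 0" for j
    using assms xi_prob_nonneg by simp
  show summable: "summable (\<lambda>j. w j * xi_prob lam mu alpha t j)"
    using nonneg sum_xi_prob_mult_le[OF assms] by (intro summableI_nonneg_bounded[of _ M])
  show "(\<Sum>j. w j * xi_prob lam mu alpha t j) \<le> M"
    using sum_xi_prob_mult_le[OF assms] by (intro suminf_le_const[OF summable])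
qed

lemma summable_xi_prob:
  assumes "lam > 0" "mu > 0" "alpha \<ge> 0" "t \<ge> 0"
  shows "summable (\<lambda>j. xi_prob lam mu alpha t j)"
  using xi_prob_moment_le(1)[OF assms, of "\<lambda>_. 1" 1] sum_eta_dist[OF assms(1,2)] by simp

lemma summable_xi_scaled_terms:
  assumes "lam > 0" "mu > 0" "alpha \<ge> 0" "t \<ge> 0"
  shows "summable (\<lambda>j. if real j / phi t \<in> B then xi_prob lam mu alpha t j else 0)"
  by (rule summable_comparison_test[OF _ summable_xi_prob[OF assms]])
    (use xi_prob_nonneg[OF assms] in auto)

lemma xi_scaled_prob_nonneg:
  assumes "lam > 0" "mu > 0" "alpha \<ge> 0" "t \<ge> 0"
  shows "xi_scaled_prob lam mu alpha phi t B \<ge> 0"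
  unfolding xi_scaled_prob_def
  by (intro suminf_nonneg summable_xi_scaled_terms[OF assms]) (use xi_prob_nonneg[OF assms] in auto)

lemma xi_scaled_prob_eq_0:
  assumes "\<And>j. real j / phi t \<notin> B"
  shows "xi_scaled_prob lam mu alpha phi t B = 0"
  unfolding xi_scaled_prob_def using assms by simp

lemma xi_scaled_prob_le:
  assumes "lam > 0" "mu > 0" "alpha \<ge> 0" "t \<ge> 0" "r \<ge> 1"
    and M: "\<And>n. (\<Sum>j\<le>n. eta_dist lam mu n j * r^j) \<le> M"
    and B: "\<And>j. real j / phi t \<in> B \<Longrightarrow> real j \<ge> z"
  shows "xi_scaled_prob lam mu alpha phi t B \<le> r powr (-z) * M"
proof -
  have summable: "summable (\<lambda>j. r^j * xi_prob lam mu alpha t j)"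
    and le: "(\<Sum>j. r^j * xi_prob lam mu alpha t j) \<le> M"
    using xi_prob_moment_le[OF assms(1-4), of "\<lambda>j. r^j" M] M assms(5) by auto
  have "xi_scaled_prob lam mu alpha phi t B \<le> (\<Sum>j. r powr (-z) * (r^j * xi_prob lam mu alpha t j))"
    unfolding xi_scaled_prob_def
  proof (rule suminf_le)
    fix j
    have "1 \<le> r powr (-z) * r^j" if "real j / phi t \<in> B"
    proof -
      have "r powr (-z) * r^j = r powr (real j - z)"
        using assms(5) by (simp add: powr_realpow[symmetric] powr_diff powr_minus divide_inverse)
      then show ?thesis using B[OF that] assms(5) by (simp add: ge_one_powr_ge_zero)
    qed
    then show "(if real j / phi t \<in> B then xi_prob lam mu alpha t j else 0) \<le>
        r powr (-z) * (r^j * xi_prob lam mu alpha t j)"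
      using xi_prob_nonneg[OF assms(1-4), of j] assms(5)
      by (auto simp: mult.assoc[symmetric] intro: mult_le_cancel_right1[THEN iffD2])
  qed (use summable_xi_scaled_terms[OF assms(1-4)] summable_mult[OF summable] in auto)
  also have "\<dots> = r powr (-z) * (\<Sum>j. r^j * xi_prob lam mu alpha t j)"
    by (rule suminf_mult[OF summable])
  also have "\<dots> \<le> r powr (-z) * M" using le by (intro mult_left_mono) auto
  finally show ?thesis .
qed

lemma xi_scaled_prob_ge_pair:
  assumes "lam > 0" "mu > 0" "alpha \<ge> 0" "t \<ge> 0"
    and "real k / phi t \<in> B" "real (Suc k) / phi t \<in> B"
  shows "xi_prob lam mu alpha t k + xi_prob lam mu alpha t (Suc k) \<le> xi_scaled_prob lam mu alpha phi t B"
proof -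
  have "(\<Sum>j\<in>{k, Suc k}. if real j / phi t \<in> B then xi_prob lam mu alpha t j else 0) \<le>
      xi_scaled_prob lam mu alpha phi t B"
    unfolding xi_scaled_prob_def
    by (rule sum_le_suminf[OF summable_xi_scaled_terms[OF assms(1-4)]]) (use xi_prob_nonneg[OF assms(1-4)] in auto)
  then show ?thesis using assms by simp
qed

text \<open>Average the bound of eta_dist_pair_ge over a Poisson window [k + 2, N] of mass at
  least 1/2, on which 1/n \<ge> 1/N \<ge> 1/(5 alpha t).\<close>
lemma xi_prob_pair_ge:
  assumes "lam > 0" "mu > 0" "alpha > 0" "t \<ge> 0" "k \<ge> 1"
    "real (k + 2) \<le> alpha * t / 4" "alpha * t \<ge> 8"
  shows "(lam/(lam+mu))^k * (mu/(lam+mu)) / (20 * alpha * t) \<le>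
    xi_prob lam mu alpha t k + xi_prob lam mu alpha t (Suc k)"
proof -
  define c where "c = (lam/(lam+mu))^k * (mu/(lam+mu))"
  define f where "f n = poisson_prob alpha t n * (eta_dist lam mu n k + eta_dist lam mu n (Suc k))" for n
  have c: "c \<ge> 0" using assms by (simp add: c_def)
  obtain N where N: "0 < real N" "real N \<le> 5 * (alpha * t)"
    and window: "1/2 \<le> (\<Sum>n\<in>{k+2..N}. poisson_prob alpha t n)"
    using poisson_prob_window_ge_half[of alpha t "k + 2"] assms by auto
  have "0 < alpha * t * real N" using N(1) assms(7) by simp
  then have "c / (20 * alpha * t) \<le> c / (4 * real N)"
    using c N(2) by (intro divide_left_mono) (auto simp: mult.assoc)
  also have "\<dots> = 1/2 * (c / (2 * real N))" by simp
  also have "\<dots> \<le> (\<Sum>n\<in>{k+2..N}. poisson_prob alpha t n) * (c / (2 * real N))"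
    using window c N by (intro mult_right_mono) auto
  also have "\<dots> \<le> (\<Sum>n\<in>{k+2..N}. f n)"
    unfolding sum_distrib_right f_def
  proof (intro sum_mono)
    fix n assume n: "n \<in> {k+2..N}"
    have "c / (2 * real N) \<le> c / (2 * real n)"
      using n c assms by (intro divide_left_mono) auto
    also have "\<dots> \<le> eta_dist lam mu n k + eta_dist lam mu n (Suc k)"
      unfolding c_def using eta_dist_pair_ge[OF assms(1,2,5)] n by auto
    finally show "poisson_prob alpha t n * (c / (2 * real N)) \<le>
        poisson_prob alpha t n * (eta_dist lam mu n k + eta_dist lam mu n (Suc k))"
      using assms by (intro mult_left_mono poisson_prob_nonneg) auto
  qed
  also have "\<dots> \<le> (\<Sum>n. f n)"
  proof (rule sum_le_suminf)
    show "summable f"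
      unfolding f_def distrib_left using assms by (intro summable_add summable_poisson_eta) auto
    show "0 \<le> f n" for n
      using assms by (simp add: f_def eta_dist_nonneg poisson_prob_nonneg)
  qed simp
  also have "\<dots> = xi_prob lam mu alpha t k + xi_prob lam mu alpha t (Suc k)"
    unfolding xi_prob_def f_def distrib_left using assms
    by (intro suminf_add[symmetric] summable_poisson_eta) auto
  finally show ?thesis by (simp add: c_def)
qed

lemma tendsto_ln_divide_0:
  fixes phi :: "real \<Rightarrow> real"
  assumes "a > 0" "filterlim (\<lambda>T. phi T / T powr a) at_top at_top"
  shows "((\<lambda>T. ln T / phi T) \<longlongrightarrow> 0) at_top"
proof (rule tendsto_sandwich)
  have "eventually (\<lambda>T. phi T / T powr a > 0 \<and> T \<ge> 1) at_top"
    using assms(2) by (intro eventually_conj) (auto simp: filterlim_at_top_dense)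
  moreover have "phi T > 0" if "phi T / T powr a > 0" "T \<ge> 1" for T
    using that by (simp add: zero_less_divide_iff)
  ultimately have ev: "eventually (\<lambda>T. phi T > 0 \<and> T \<ge> 1) at_top"
    by (auto elim: eventually_mono)
  show "eventually (\<lambda>T. 0 \<le> ln T / phi T) at_top"
    using ev by eventually_elim simp
  show "eventually (\<lambda>T. ln T / phi T \<le> 1 / a * inverse (phi T / T powr a)) at_top"
    using ev
  proof eventually_elim
    case (elim T)
    then have "ln T / phi T \<le> (T powr a / a) / phi T"
      using ln_powr_bound[of T a] assms(1) by (intro divide_right_mono) auto
    also have "\<dots> = 1 / a * inverse (phi T / T powr a)" by simp
    finally show ?case .
  qed
  show "((\<lambda>T. 1 / a * inverse (phi T / T powr a)) \<longlongrightarrow> 0) at_top"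
    by (rule tendsto_mult_right_zero[OF tendsto_inverse_0_at_top[OF assms(2)]])
qed simp

lemma Limsup_le_tendsto:
  fixes f g :: "'a \<Rightarrow> 'b :: {complete_linorder, linorder_topology}"
  assumes "F \<noteq> bot" "eventually (\<lambda>x. f x \<le> g x) F" "(g \<longlongrightarrow> l) F"
  shows "Limsup F f \<le> l"
  using Limsup_mono[OF assms(2)] lim_imp_Limsup[OF assms(1,3)] by simp

lemma Liminf_ge_tendsto:
  fixes f g :: "'a \<Rightarrow> 'b :: {complete_linorder, linorder_topology}"
  assumes "F \<noteq> bot" "eventually (\<lambda>x. g x \<le> f x) F" "(g \<longlongrightarrow> l) F"
  shows "l \<le> Liminf F f"
  using Liminf_mono[OF assms(2)] lim_imp_Liminf[OF assms(1,3)] by simp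

lemma eln_divide_le:
  assumes "0 \<le> P" "P \<le> c" "y > 0"
  shows "eln P / ereal y \<le> ereal (ln c / y)"
proof (cases "P > 0")
  case True
  then have "ln P / y \<le> ln c / y" using assms by (intro divide_right_mono) auto
  then show ?thesis using True assms by (simp add: eln_def)
qed (use assms in \<open>simp add: eln_def\<close>)

lemma eln_divide_ge:
  assumes "0 < c" "c \<le> P" "y > 0"
  shows "ereal (ln c / y) \<le> eln P / ereal y"
proof -
  have "ln c / y \<le> ln P / y" using assms by (intro divide_right_mono) auto
  then show ?thesis using assms by (simp add: eln_def)
qed

abbreviation xi_log_prob_rate ::
    "real \<Rightarrow> real \<Rightarrow> real \<Rightarrow> (real \<Rightarrow> real) \<Rightarrow> real set \<Rightarrow> real \<Rightarrow> ereal" where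
  "xi_log_prob_rate lam mu alpha phi B T \<equiv> eln (xi_scaled_prob lam mu alpha phi T B) / ereal (phi T)"

lemma xi_log_prob_rate_Limsup_le_ln:
  assumes "lam > 0" "mu > 0" "alpha > 0" "\<forall>T>0. phi T > 0" "filterlim phi at_top at_top"
    and "r > 1" "lam/(lam+mu) * r < 1" "B \<inter> {0..} \<subseteq> {x0..}"
  shows "Limsup at_top (xi_log_prob_rate lam mu alpha phi B) \<le> ereal (- x0 * ln r)"
proof -
  obtain M where M: "M > 0" "\<And>n. (\<Sum>j\<le>n. eta_dist lam mu n j * r^j) \<le> M"
    using eta_dist_exp_moment_bounded[OF assms(1,2,6,7)] by blast
  have ev: "eventually (\<lambda>T. xi_log_prob_rate lam mu alpha phi B T \<le> ereal (ln M / phi T - x0 * ln r)) at_top"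
    using eventually_gt_at_top[of 0]
  proof eventually_elim
    case (elim T)
    have phi: "phi T > 0" using assms(4) elim by auto
    have "x0 * phi T \<le> real j" if "real j / phi T \<in> B" for j
      using that assms(8) phi by (auto simp: field_simps)
    then have "xi_scaled_prob lam mu alpha phi T B \<le> r powr (- (x0 * phi T)) * M"
      using assms elim M by (intro xi_scaled_prob_le) auto
    moreover have "ln (r powr (- (x0 * phi T)) * M) / phi T = ln M / phi T - x0 * ln r"
      using M assms(6) phi by (simp add: ln_mult field_simps)
    moreover have "0 \<le> xi_scaled_prob lam mu alpha phi T B"
      using assms elim by (intro xi_scaled_prob_nonneg) auto
    ultimately show ?case using eln_divide_le[OF _ _ phi] by metis
  qed
  have "((\<lambda>T. ln M / phi T - x0 * ln r) \<longlongrightarrow> 0 - x0 * ln r) at_top"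
    using assms(5) by (intro tendsto_intros tendsto_divide_0[OF tendsto_const] filterlim_at_top_imp_at_infinity)
  then have "((\<lambda>T. ereal (ln M / phi T - x0 * ln r)) \<longlongrightarrow> ereal (- x0 * ln r)) at_top"
    by (intro tendsto_ereal) simp
  from Limsup_le_tendsto[OF _ ev this] show ?thesis by simp
qed

text \<open>Letting r increase to (lam + mu) / lam, the limit of admissible ratios.\<close>
lemma xi_log_prob_rate_Limsup_le:
  assumes "lam > 0" "mu > 0" "alpha > 0" "\<forall>T>0. phi T > 0" "filterlim phi at_top at_top"
    and "B \<inter> {0..} \<subseteq> {x0..}"
  shows "Limsup at_top (xi_log_prob_rate lam mu alpha phi B) \<le> ereal (- x0 * ln ((lam+mu)/lam))"
proof (rule tendsto_le[OF trivial_limit_at_left_real])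
  define R where "R = (lam+mu)/lam"
  have R: "R > 1" using assms by (simp add: R_def)
  show "((\<lambda>r. ereal (- x0 * ln r)) \<longlongrightarrow> ereal (- x0 * ln R)) (at_left R)"
    using R by (intro tendsto_intros) auto
  show "eventually (\<lambda>r. Limsup at_top (xi_log_prob_rate lam mu alpha phi B) \<le> ereal (- x0 * ln r)) (at_left R)"
    using eventually_at_left_real[OF R]
  proof eventually_elim
    case (elim r)
    have "lam/(lam+mu) * r < lam/(lam+mu) * R" using elim assms by (intro mult_strict_left_mono) auto
    also have "\<dots> = 1" using assms by (simp add: R_def)
    finally show ?case using elim assms by (intro xi_log_prob_rate_Limsup_le_ln) auto
  qed
qed simp

lemma xi_scaled_prob_ge_near:
  assumes "lam > 0" "mu > 0" "alpha > 0" "phi T > 0" "x > 0" "2 / phi T < \<delta>"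
    "{x-\<delta><..<x+\<delta>} \<subseteq> B" "x * phi T + 3 \<le> alpha * T / 4" "alpha * T \<ge> 8"
  obtains k where "real k < x * phi T + 1"
    "(lam/(lam+mu))^k * (mu/(lam+mu)) / (20 * alpha * T) \<le> xi_scaled_prob lam mu alpha phi T B"
proof -
  define k where "k = nat \<lceil>x * phi T\<rceil>"
  have xphi: "x * phi T > 0" using assms by simp
  then have k: "x * phi T \<le> real k" "real k < x * phi T + 1"
    unfolding k_def by linarith+
  then have "k \<ge> 1" using xphi by (cases k) auto
  have "T \<ge> 0" using assms(3,9) by (smt (verit) mult_nonneg_nonpos)
  have "x \<le> real k / phi T" using k assms(4) by (simp add: field_simps)
  have "real (Suc k) / phi T < (x * phi T + 2) / phi T"
    using k assms(4) by (intro divide_strict_right_mono) auto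
  also have "\<dots> = x + 2 / phi T" using assms(4) by (simp add: field_simps)
  finally have "real (Suc k) / phi T < x + 2 / phi T" .
  moreover note \<open>x \<le> real k / phi T\<close>
  moreover have "real k / phi T \<le> real (Suc k) / phi T"
    using assms(4) by (simp add: divide_right_mono)
  moreover have "0 < 2 / phi T" using assms(4) by simp
  ultimately have "real k / phi T \<in> B" "real (Suc k) / phi T \<in> B"
    using assms(6) by (auto intro!: subsetD[OF assms(7)])
  then have "xi_prob lam mu alpha T k + xi_prob lam mu alpha T (Suc k) \<le> xi_scaled_prob lam mu alpha phi T B"
    using assms \<open>T \<ge> 0\<close> by (intro xi_scaled_prob_ge_pair) auto
  moreover have "(lam/(lam+mu))^k * (mu/(lam+mu)) / (20 * alpha * T) \<le>
      xi_prob lam mu alpha T k + xi_prob lam mu alpha T (Suc k)"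
    using assms k \<open>k \<ge> 1\<close> \<open>T \<ge> 0\<close> by (intro xi_prob_pair_ge) auto
  ultimately show ?thesis using k that by simp
qed

lemma xi_log_prob_rate_ge_near:
  assumes "lam > 0" "mu > 0" "alpha > 0" "phi T > 0" "x > 0" "2 / phi T < \<delta>"
    "{x-\<delta><..<x+\<delta>} \<subseteq> B" "x * phi T + 3 \<le> alpha * T / 4" "alpha * T \<ge> 8"
  shows "ereal (x * ln (lam/(lam+mu)) +
      (ln (lam/(lam+mu)) + ln (mu/(lam+mu)) - ln (20 * alpha)) / phi T - ln T / phi T)
    \<le> xi_log_prob_rate lam mu alpha phi B T"
proof -
  define p where "p = lam/(lam+mu)"
  define q where "q = mu/(lam+mu)"
  have p: "0 < p" "ln p < 0" and q: "q > 0" using assms by (auto simp: p_def q_def)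
  have T: "T > 0" using assms(3,9) by (smt (verit) mult_nonneg_nonpos)
  obtain k where k: "real k < x * phi T + 1"
    and P: "p^k * q / (20 * alpha * T) \<le> xi_scaled_prob lam mu alpha phi T B"
    unfolding p_def q_def by (rule xi_scaled_prob_ge_near[where phi = phi and T = T, OF assms])
  have "(x * phi T + 1) * ln p \<le> real k * ln p"
    using k p by (intro mult_right_mono_neg) auto
  then have "((x * phi T + 1) * ln p + ln q - ln (20 * alpha) - ln T) / phi T \<le>
      ln (p^k * q / (20 * alpha * T)) / phi T"
    using p q T assms(3,4) by (intro divide_right_mono) (simp_all add: ln_mult ln_div ln_realpow)
  also have "((x * phi T + 1) * ln p + ln q - ln (20 * alpha) - ln T) / phi T =
      x * ln p + (ln p + ln q - ln (20 * alpha)) / phi T - ln T / phi T"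
    using assms(4) by (simp add: field_simps)
  finally have "ereal (x * ln p + (ln p + ln q - ln (20 * alpha)) / phi T - ln T / phi T) \<le>
      ereal (ln (p^k * q / (20 * alpha * T)) / phi T)"
    by simp
  also have "\<dots> \<le> xi_log_prob_rate lam mu alpha phi B T"
    using p q T assms(3) by (intro eln_divide_ge[OF _ P assms(4)]) simp
  finally show ?thesis unfolding p_def q_def .
qed

text \<open>The scale condition phi T = o(T) guarantees that the target level x phi T lies well
  inside the range of typical values of the Poisson clock.\<close>
lemma eventually_xi_log_prob_rate_ge:
  assumes "lam > 0" "mu > 0" "alpha > 0" "\<forall>T>0. phi T > 0" "filterlim phi at_top at_top"
    "((\<lambda>T. phi T / T) \<longlongrightarrow> 0) at_top" "x > 0" "\<delta> > 0" "{x-\<delta><..<x+\<delta>} \<subseteq> B"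
  shows "eventually (\<lambda>T. ereal (x * ln (lam/(lam+mu)) +
      (ln (lam/(lam+mu)) + ln (mu/(lam+mu)) - ln (20 * alpha)) / phi T - ln T / phi T)
    \<le> xi_log_prob_rate lam mu alpha phi B T) at_top"
proof -
  have "eventually (\<lambda>T. phi T / T < alpha / (8 * x)) at_top"
    using order_tendstoD(2)[OF assms(6)] assms by simp
  moreover have "eventually (\<lambda>T. phi T > 2 / \<delta>) at_top"
    using assms(5) by (simp add: filterlim_at_top_dense)
  ultimately show ?thesis using eventually_ge_at_top[of "max 1 (24 / alpha)"]
  proof eventually_elim
    case (elim T)
    have T: "T \<ge> 1" "alpha * T \<ge> 24" using elim assms by (auto simp: field_simps)
    have phi: "phi T > 0" using assms(4) T by auto
    have "x * phi T < alpha * T / 8" using elim(1) T assms by (simp add: field_simps)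
    then have "x * phi T + 3 \<le> alpha * T / 4" using T by linarith
    moreover have "2 / phi T < \<delta>" using elim(2) phi assms by (simp add: field_simps)
    ultimately show ?case
      using T by (intro xi_log_prob_rate_ge_near[where phi = phi and T = T, OF assms(1-3) phi assms(7) _ assms(9)]) auto
  qed
qed

lemma xi_log_prob_rate_Liminf_ge:
  assumes "lam > 0" "mu > 0" "alpha > 0" "\<forall>T>0. phi T > 0" "filterlim phi at_top at_top"
    "((\<lambda>T. phi T / T) \<longlongrightarrow> 0) at_top" "((\<lambda>T. ln T / phi T) \<longlongrightarrow> 0) at_top"
    "x > 0" "\<delta> > 0" "{x-\<delta><..<x+\<delta>} \<subseteq> B"
  shows "ereal (- x * ln ((lam+mu)/lam)) \<le> Liminf at_top (xi_log_prob_rate lam mu alpha phi B)"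
proof -
  define C where "C = ln (lam/(lam+mu)) + ln (mu/(lam+mu)) - ln (20 * alpha)"
  have "((\<lambda>T. x * ln (lam/(lam+mu)) + C / phi T - ln T / phi T) \<longlongrightarrow>
      x * ln (lam/(lam+mu)) + 0 - 0) at_top"
    using assms(5,7) by (intro tendsto_intros tendsto_divide_0[OF tendsto_const] filterlim_at_top_imp_at_infinity)
  moreover have "x * ln (lam/(lam+mu)) = - x * ln ((lam+mu)/lam)"
    using assms by (simp add: ln_div algebra_simps)
  ultimately have "((\<lambda>T. ereal (x * ln (lam/(lam+mu)) + C / phi T - ln T / phi T)) \<longlongrightarrow>
      ereal (- x * ln ((lam+mu)/lam))) at_top"
    by (intro tendsto_ereal) simp
  from Liminf_ge_tendsto[OF _ eventually_xi_log_prob_rate_ge[OF assms(1-6,8-10), folded C_def] this]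
  show ?thesis by simp
qed

lemma I1_nonneg: "lam > 0 \<Longrightarrow> mu > 0 \<Longrightarrow> 0 \<le> I1 lam mu x"
  by (simp add: I1_def)

lemma I1_sublevel_eq:
  assumes "lam > 0" "mu > 0" "c \<ge> 0"
  shows "{x. I1 lam mu x \<le> ereal c} = {0..c / ln ((lam+mu)/lam)}"
  using assms by (auto simp: I1_def field_simps)

lemma xi_log_prob_rate_Limsup_le_closure:
  assumes "lam > 0" "mu > 0" "alpha > 0" "\<forall>T>0. phi T > 0" "filterlim phi at_top at_top"
  shows "Limsup at_top (xi_log_prob_rate lam mu alpha phi B) \<le> - rate_set (I1 lam mu) (closure B)"
proof (cases "closure B \<inter> {0..} = {}")
  case True
  have "eventually (\<lambda>T. xi_log_prob_rate lam mu alpha phi B T \<le> - \<infinity>) at_top"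
    using eventually_gt_at_top[of 0]
  proof eventually_elim
    case (elim T)
    have phi: "phi T > 0" using assms(4) elim by auto
    have "real j / phi T \<notin> B" for j
      using True phi closure_subset by fastforce
    then show ?case using phi by (simp add: xi_scaled_prob_eq_0 eln_def)
  qed
  from Limsup_le_tendsto[OF _ this tendsto_const] show ?thesis by simp
next
  case False
  define S where "S = closure B \<inter> {0..}"
  have S: "S \<noteq> {}" "bdd_below S" "closed S"
    using False by (auto simp: S_def intro: bdd_belowI[of _ 0])
  define x0 where "x0 = Inf S"
  have x0: "x0 \<in> S" unfolding x0_def by (rule closed_contains_Inf[OF S(1,2,3)])
  have "B \<inter> {0..} \<subseteq> {x0..}"
    using closure_subset cInf_lower[OF _ S(2)] by (fastforce simp: x0_def S_def)
  then have "Limsup at_top (xi_log_prob_rate lam mu alpha phi B) \<le> ereal (- x0 * ln ((lam+mu)/lam))"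
    using assms by (intro xi_log_prob_rate_Limsup_le)
  moreover have "rate_set (I1 lam mu) (closure B) \<le> I1 lam mu x0"
    unfolding rate_set_def using x0 by (intro INF_lower) (simp add: S_def)
  then have "rate_set (I1 lam mu) (closure B) \<le> ereal (x0 * ln ((lam+mu)/lam))"
    using x0 by (simp add: S_def I1_def)
  then have "ereal (- x0 * ln ((lam+mu)/lam)) \<le> - rate_set (I1 lam mu) (closure B)"
    by (metis ereal_minus_le_minus uminus_ereal.simps(1) mult_minus_left)
  ultimately show ?thesis by (rule order_trans)
qed

text \<open>Points y \<ge> 0 of the interior are approached from the right by points z > 0 whose
  neighbourhoods still lie in B.\<close>
lemma xi_log_prob_rate_Liminf_ge_interior:
  assumes "lam > 0" "mu > 0" "alpha > 0" "\<forall>T>0. phi T > 0" "filterlim phi at_top at_top"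
    "((\<lambda>T. phi T / T) \<longlongrightarrow> 0) at_top" "((\<lambda>T. ln T / phi T) \<longlongrightarrow> 0) at_top"
  shows "- rate_set (I1 lam mu) (interior B) \<le> Liminf at_top (xi_log_prob_rate lam mu alpha phi B)"
proof -
  define L where "L = Liminf at_top (xi_log_prob_rate lam mu alpha phi B)"
  have "- I1 lam mu y \<le> L" if y: "y \<in> interior B" for y
  proof (cases "y < 0")
    case False
    obtain e where e: "e > 0" "ball y e \<subseteq> B"
      using y by (meson interior_subset open_contains_ball_eq open_interior order_trans)
    have "eventually (\<lambda>z. z \<in> {y<..<y + e/2}) (at_right y)"
      using eventually_at_right_real[of y "y + e/2"] e(1) by simp
    then have ev: "eventually (\<lambda>z. ereal (- z * ln ((lam+mu)/lam)) \<le> L) (at_right y)"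
    proof eventually_elim
      case (elim z)
      have "{z - e/2<..<z + e/2} \<subseteq> ball y e"
        using elim by (auto simp: dist_real_def)
      then have "{z - e/2<..<z + e/2} \<subseteq> B" using e(2) by blast
      then show ?case
        unfolding L_def using elim False assms
        by (intro xi_log_prob_rate_Liminf_ge[of _ _ _ _ _ "e/2"]) auto
    qed
    have "((\<lambda>z. ereal (- z * ln ((lam+mu)/lam))) \<longlongrightarrow> ereal (- y * ln ((lam+mu)/lam))) (at_right y)"
      by (intro tendsto_intros)
    from tendsto_le[OF trivial_limit_at_right_real tendsto_const this ev]
    have "ereal (- y * ln ((lam+mu)/lam)) \<le> L" .
    then show ?thesis using False by (simp add: I1_def)
  qed (simp add: I1_def)
  then have "- L \<le> rate_set (I1 lam mu) (interior B)"
    unfolding rate_set_def by (intro INF_greatest) (simp add: ereal_uminus_le_reorder)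
  then show ?thesis unfolding L_def by (simp add: ereal_uminus_le_reorder)
qed

theorem theorem2p3:
  fixes lam mu alpha :: real and phi :: "real \<Rightarrow> real"
  assumes "lam > 0" and "mu > 0" and "alpha > 0"
    and "\<forall>T>0. phi T > 0"
    and "filterlim phi at_top at_top"
    and "((\<lambda>T. phi T / T) \<longlongrightarrow> 0) at_top"
    and "\<exists>a. 0 < a \<and> a < 1 \<and> filterlim (\<lambda>T. phi T / T powr a) at_top at_top"
  shows "LDP (xi_scaled_prob lam mu alpha phi) (I1 lam mu) phi"
proof -
  have "((\<lambda>T. ln T / phi T) \<longlongrightarrow> 0) at_top"
    \<comment> \<open>only a > 0 is needed, not a < 1\<close>
    using assms(7) tendsto_ln_divide_0 by blast
  then show ?thesis
    unfolding LDP_def using assms(1-6)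
    by (simp add: I1_nonneg I1_sublevel_eq xi_log_prob_rate_Limsup_le_closure
        xi_log_prob_rate_Liminf_ge_interior)
qed

end
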